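(* Assume the standing assumptions (A) and let $\mathcal D$ be a Gradient Discretisation with piecewise constant reconstruction. Then there exists a solution $u\in X_{\mathcal D,0}$ to the Gradient Scheme (GS), and if $u_1,u_2\in X_{\mathcal D,0}$ are two solutions of (GS), then $\zeta(u_1)=\zeta(u_2)$ and $\Pi_{\mathcal D}u_1=\Pi_{\mathcal D}u_2$.
   Context: Standing assumptions (A): $\Omega$ is an open bounded connected subset of $\mathbb{R}^d$; $\zeta:\mathbb{R}\to\mathbb{R}$ is continuous, non-decreasing, $\zeta(0)=0$ and there are $M_0,M_1>0$ with $|\zeta(s)|\ge M_0|s|-M_1$ for all $s$; $\beta:\mathbb{R}\to\mathbb{R}$ is continuous, non-decreasing, $\beta(0)=0$ and there are $K_0,K_1>0$ with $|\beta(s)|\le K_0|s|+K_1$ for all $s$; $\beta+\zeta$ is strictly increasing; $\Lambda:\Omega\to M_d(\mathbb{R})$ is measurable and there are $\overline\lambda\ge\underline\lambda>0$ such that for a.e. $x$, $\Lambda(x)$ is symmetric with eigenvalues in $[\underline\lambda,\overline\lambda]$; $f\in L^2(\Omega)$, $F\in L^2(\Omega)^d$. Gradient Discretisation (GD): $\mathcal D=(X_{\mathcal D,0},\Pi_{\mathcal D},\nabla_{\mathcal D},Q_{\mathcal D})$ where $X_{\mathcal D,0}$ is a finite-dimensional space, $\Pi_{\mathcal D}:X_{\mathcal D,0}\to L^2(\Omega)$ and $\nabla_{\mathcal D}:X_{\mathcal D,0}\to L^2(\Omega)^d$ are linear with $\|v\|_{\mathcal D}:=\|\nabla_{\mathcal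 D}v\|_{L^2}$ a norm on $X_{\mathcal D,0}$, and $Q_{\mathcal D}:L^2(\Omega)\to L^2(\Omega)$ is a (not necessarily linear or bounded) map called the quadrature operator. Piecewise constant reconstruction: there are finite sets $I_{\partial\Omega}\subset I$ with $X_{\mathcal D,0}=\{v=(v_i)_{i\in I}: v_i\in\mathbb{R},\ v_i=0\ \forall i\in I_{\partial\Omega}\}$ and a partition $(U_i)_{i\in I}$ of $\Omega$ (some $U_i$ possibly empty) with $\Pi_{\mathcal D}v=\sum_{i\in I}v_i\mathbf 1_{U_i}$. For $g:\mathbb{R}\to\mathbb{R}$ with $g(0)=0$, $g(v):=(g(v_i))_{i\in I}\in X_{\mathcal D,0}$. Gradient Scheme (GS): find $u\in X_{\mathcal D,0}$ such that for all $v\in X_{\mathcal D,0}$, $\int_\Omega\beta(\Pi_{\mathcal D}u)\Pi_{\mathcal D}v+\int_\Omega\Lambda\nabla_{\mathcal D}\zeta(u)\cdot\nabla_{\mathcal D}v=\int_\Omega Q_{\mathcal D}f\,\Pi_{\mathcal D}v-\int_\Omega F\cdot\nabla_{\mathcal D}v$. *)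

theory Defs
  imports "HOL-Analysis.Analysis"
begin

definition L2 :: "(real^'n) set \<Rightarrow> (real^'n \<Rightarrow> 'b::{real_normed_vector, second_countable_topology}) \<Rightarrow> bool" where
  "L2 \<Omega> g \<longleftrightarrow> g \<in> borel_measurable (lebesgue_on \<Omega>) \<and>
     integrable (lebesgue_on \<Omega>) (\<lambda>x. (norm (g x))\<^sup>2)"

definition is_eigenvalue :: "real^'n^'n \<Rightarrow> real \<Rightarrow> bool" where
  "is_eigenvalue A c \<longleftrightarrow> (\<exists>v. v \<noteq> 0 \<and> A *v v = c *\<^sub>R v)"

text \<open>Discrete space X_{D,0}: families indexed by the finite type 'i vanishing on the boundary indices.\<close>
definition XD0 :: "'i set \<Rightarrow> ('i::finite \<Rightarrow> real) set" where
  "XD0 Ib = {v. \<forall>i\<in>Ib. v i = 0}"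

definition PiD :: "('i::finite \<Rightarrow> (real^'n) set) \<Rightarrow> ('i \<Rightarrow> real) \<Rightarrow> real^'n \<Rightarrow> real" where
  "PiD U v x = (\<Sum>i\<in>UNIV. v i * indicator (U i) x)"

definition compw :: "(real \<Rightarrow> real) \<Rightarrow> ('i \<Rightarrow> real) \<Rightarrow> ('i \<Rightarrow> real)" where
  "compw g v = (\<lambda>i. g (v i))"

definition is_GS_solution ::
  "(real^'n) set \<Rightarrow> 'i set \<Rightarrow> ('i::finite \<Rightarrow> (real^'n) set) \<Rightarrow> (('i \<Rightarrow> real) \<Rightarrow> real^'n \<Rightarrow> real^'n)
   \<Rightarrow> (real \<Rightarrow> real) \<Rightarrow> (real \<Rightarrow> real) \<Rightarrow> (real^'n \<Rightarrow> real^'n^'n)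
   \<Rightarrow> (real^'n \<Rightarrow> real) \<Rightarrow> (real^'n \<Rightarrow> real^'n) \<Rightarrow> ('i \<Rightarrow> real) \<Rightarrow> bool" where
  "is_GS_solution \<Omega> Ib U gradD \<beta> \<zeta> \<Lambda> Qf F u \<longleftrightarrow> u \<in> XD0 Ib \<and>
     (\<forall>v\<in>XD0 Ib.
        integral\<^sup>L (lebesgue_on \<Omega>) (\<lambda>x. \<beta> (PiD U u x) * PiD U v x)
      + integral\<^sup>L (lebesgue_on \<Omega>) (\<lambda>x. (\<Lambda> x *v gradD (compw \<zeta> u) x) \<bullet> gradD v x)
      = integral\<^sup>L (lebesgue_on \<Omega>) (\<lambda>x. Qf x * PiD U v x)
      - integral\<^sup>L (lebesgue_on \<Omega>) (\<lambda>x. F x \<bullet> gradD v x))"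

end

theory Submission
  imports Defs
begin

text \<open>
  Testing (GS) with the unit vectors \<open>e\<^sub>i\<close> of \<open>X_{D,0}\<close> turns it into a finite system
  \<open>|U\<^sub>i| \<beta>(u\<^sub>i) + (\<Sum>j. A\<^sub>j\<^sub>i \<zeta>(u\<^sub>j)) = b\<^sub>i\<close> over the interior indices \<open>i\<close>, whose stiffness matrix
  \<open>A\<^sub>j\<^sub>i = \<integral> \<Lambda> \<nabla>e\<^sub>j \<cdot> \<nabla>e\<^sub>i\<close> is positive definite because \<open>\<Lambda>\<close> is uniformly elliptic and
  \<open>\<parallel>\<nabla>\<^sub>D \<cdot>\<parallel>\<close> is a norm.

  Existence: as \<open>\<zeta>\<close> may be constant on intervals, the unknowns are changed to
  \<open>y\<^sub>i = \<zeta>(u\<^sub>i) + arctan u\<^sub>i\<close>, a homeomorphism of \<open>\<real>\<close>. Since \<open>y\<close> differs from \<open>\<zeta>(u)\<close> by a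
  bounded amount, the inner product of the residual with \<open>y\<close> grows quadratically in \<open>|y|\<close>; it is
  therefore positive on a large sphere, and Brouwer's fixed point theorem yields a zero.

  Uniqueness: testing the difference of the systems of two solutions \<open>u, v\<close> with
  \<open>d = \<zeta>(u) - \<zeta>(v)\<close> gives \<open>(\<Sum>i. |U\<^sub>i| (\<beta>(u\<^sub>i) - \<beta>(v\<^sub>i)) d\<^sub>i) + d\<^sup>T A d = 0\<close>, where both
  terms are non-negative by monotonicity, so \<open>d = 0\<close>. The equations then force
  \<open>\<beta>(u\<^sub>i) = \<beta>(v\<^sub>i)\<close> on cells of positive measure, where strict monotonicity of \<open>\<beta> + \<zeta>\<close>
  gives \<open>u\<^sub>i = v\<^sub>i\<close>.
\<close>

section \<open>Symmetric matrices\<close>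

lemma self_adjoint_psd_kernel:
  fixes b :: "'a::euclidean_space \<Rightarrow> 'a"
  assumes lin: "linear b" and sym: "\<And>x y. b x \<bullet> y = x \<bullet> b y"
    and psd: "\<And>x. b x \<bullet> x \<ge> 0" and zero: "b x \<bullet> x = 0"
  shows "b x = 0"
proof (rule ccontr)
  assume "b x \<noteq> 0"
  define y where "y = b x"
  define a where "a = y \<bullet> y"
  define B where "B = b y \<bullet> y"
  define s where "s = a / (B + 1)"
  have a: "a > 0" using \<open>b x \<noteq> 0\<close> by (simp add: a_def y_def)
  have B: "B \<ge> 0" using psd by (simp add: B_def)
  have s: "s > 0" "s * B < a" using a B by (auto simp: s_def field_simps)
  \<comment> \<open>the quadratic form is negative at \<open>x - s y\<close> for small \<open>s > 0\<close>\<close>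
  have "0 \<le> b (x - s *\<^sub>R y) \<bullet> (x - s *\<^sub>R y)" by (rule psd)
  also have "b (x - s *\<^sub>R y) = b x - s *\<^sub>R b y" using lin by (simp add: linear_diff linear_scale)
  also have "(b x - s *\<^sub>R b y) \<bullet> (x - s *\<^sub>R y)
      = b x \<bullet> x - s * (b x \<bullet> y) - s * (b y \<bullet> x) + s * s * (b y \<bullet> y)"
    by (simp add: inner_diff_left inner_diff_right right_diff_distrib)
  also have "b y \<bullet> x = a" using sym[of y x] by (simp add: a_def y_def inner_commute)
  finally have "0 \<le> - 2 * (s * a) + s * (s * B)" using zero by (simp add: a_def B_def y_def algebra_simps)
  moreover have "s * (s * B) < s * a" using s by simp
  moreover have "s * a > 0" using s a by simp
  ultimately show False by linarith
qed

lemma self_adjoint_psd_Cauchy_Schwarz: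
  fixes b :: "'a::euclidean_space \<Rightarrow> 'a"
  assumes lin: "linear b" and sym: "\<And>x y. b x \<bullet> y = x \<bullet> b y"
    and psd: "\<And>x. b x \<bullet> x \<ge> 0"
  shows "(b x \<bullet> y)\<^sup>2 \<le> (b x \<bullet> x) * (b y \<bullet> y)"
proof -
  define p r s where "p = b x \<bullet> x" and "r = b x \<bullet> y" and "s = b y \<bullet> y"
  have q: "0 \<le> p + 2 * (t * r) + t\<^sup>2 * s" for t
  proof -
    have "0 \<le> b (x + t *\<^sub>R y) \<bullet> (x + t *\<^sub>R y)" by (rule psd)
    also have "b (x + t *\<^sub>R y) = b x + t *\<^sub>R b y" using lin by (simp add: linear_add linear_scale)
    also have "(b x + t *\<^sub>R b y) \<bullet> (x + t *\<^sub>R y) = p + t * r + t * (b y \<bullet> x) + t\<^sup>2 * s"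
      by (simp add: p_def r_def s_def inner_add_left inner_add_right distrib_left power2_eq_square)
    also have "b y \<bullet> x = r" using sym[of y x] by (simp add: r_def inner_commute)
    finally show ?thesis by linarith
  qed
  have "s \<ge> 0" using psd by (simp add: s_def)
  show ?thesis
  proof (cases "s = 0")
    case True
    then have "r = 0" using q[of "- (p + 1) / (2 * r)"] by (cases "r = 0") (simp_all add: field_simps)
    then show ?thesis using True by (simp add: p_def r_def s_def)
  next
    case False
    then have "s > 0" using \<open>s \<ge> 0\<close> by simp
    have "0 \<le> p + 2 * (- r / s * r) + (- r / s)\<^sup>2 * s" by (rule q)
    also have "\<dots> = p - r\<^sup>2 / s" using \<open>s > 0\<close> by (simp add: field_simps power2_eq_square)
    finally have "r\<^sup>2 \<le> p * s" using \<open>s > 0\<close> by (simp add: field_simps)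
    then show ?thesis by (simp add: p_def r_def s_def)
  qed
qed

lemma symmetric_matrix_adjoint:
  fixes A :: "real^'n^'n"
  assumes "transpose A = A"
  shows "(A *v x) \<bullet> y = x \<bullet> (A *v y)"
proof -
  have "A *v x = x v* A" using transpose_matrix_vector[of A x] assms by simp
  then show ?thesis by (simp add: dot_lmul_matrix)
qed

lemma symmetric_matrix_min_Rayleigh:
  fixes A :: "real^'n^'n"
  assumes sym: "transpose A = A"
  obtains m where "is_eigenvalue A m" "\<And>x. m * (x \<bullet> x) \<le> (A *v x) \<bullet> x"
proof -
  have S: "compact (sphere (0::real^'n) 1)" "sphere (0::real^'n) 1 \<noteq> {}"
    using vector_choose_size[of 1] by auto
  have "continuous_on (sphere 0 1) (\<lambda>x. (A *v x) \<bullet> x)" by (intro continuous_intros)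
  then obtain x0 where x0: "x0 \<in> sphere 0 1"
    and min: "\<And>y. y \<in> sphere 0 1 \<Longrightarrow> (A *v x0) \<bullet> x0 \<le> (A *v y) \<bullet> y"
    using continuous_attains_inf[OF S] by blast
  define m where "m = (A *v x0) \<bullet> x0"
  have bound: "m * (x \<bullet> x) \<le> (A *v x) \<bullet> x" for x
  proof (cases "x = 0")
    case False
    define y where "y = x /\<^sub>R norm x"
    have "m \<le> (A *v y) \<bullet> y" unfolding m_def y_def using False by (intro min) simp
    then have "m * (x \<bullet> x) \<le> ((A *v y) \<bullet> y) * (x \<bullet> x)" by (simp add: mult_right_mono)
    also have "\<dots> = (A *v x) \<bullet> x"
      using False by (simp add: y_def matrix_vector_mult_scaleR power2_norm_eq_inner[symmetric]
          field_simps power2_eq_square)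
    finally show ?thesis .
  qed simp
  have "A *v x0 - m *\<^sub>R x0 = 0"
  proof (rule self_adjoint_psd_kernel[where b = "\<lambda>x. A *v x - m *\<^sub>R x"])
    show "linear (\<lambda>x. A *v x - m *\<^sub>R x)" by (auto simp: linear_iff algebra_simps)
    show "(A *v x - m *\<^sub>R x) \<bullet> y = x \<bullet> (A *v y - m *\<^sub>R y)" for x y
      by (simp add: inner_diff_left inner_diff_right symmetric_matrix_adjoint[OF sym])
    show "0 \<le> (A *v x - m *\<^sub>R x) \<bullet> x" for x using bound[of x] by (simp add: inner_diff_left)
    show "(A *v x0 - m *\<^sub>R x0) \<bullet> x0 = 0" using x0 by (simp add: inner_diff_left m_def dot_square_norm)
  qed
  then have "is_eigenvalue A m" using x0 unfolding is_eigenvalue_def by (intro exI[of _ x0]) auto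
  with bound show ?thesis using that by blast
qed

lemma symmetric_matrix_max_Rayleigh:
  fixes A :: "real^'n^'n"
  assumes sym: "transpose A = A"
  obtains M where "is_eigenvalue A M" "\<And>x. (A *v x) \<bullet> x \<le> M * (x \<bullet> x)"
proof -
  have neg: "(- A) *v x = - (A *v x)" for x
    by (simp add: matrix_vector_mult_def vec_eq_iff sum_negf)
  have "transpose (- A) = - A" using sym by (simp add: transpose_def vec_eq_iff)
  then obtain m where eig: "is_eigenvalue (- A) m" and min: "\<And>x. m * (x \<bullet> x) \<le> ((- A) *v x) \<bullet> x"
    using symmetric_matrix_min_Rayleigh by blast
  obtain v where "v \<noteq> 0" "- (A *v v) = m *\<^sub>R v" using eig unfolding is_eigenvalue_def neg by blast
  then have "is_eigenvalue A (- m)" unfolding is_eigenvalue_def by (intro exI[of _ v]) (metis minus_minus scaleR_minus_left)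
  moreover have "(A *v x) \<bullet> x \<le> - m * (x \<bullet> x)" for x using min[of x] by (simp add: neg)
  ultimately show ?thesis by (rule that)
qed

lemma symmetric_matrix_coercive:
  fixes A :: "real^'n^'n"
  assumes "transpose A = A" and "\<And>c. is_eigenvalue A c \<Longrightarrow> lo \<le> c"
  shows "lo * (x \<bullet> x) \<le> (A *v x) \<bullet> x"
proof -
  obtain m where "is_eigenvalue A m" "m * (x \<bullet> x) \<le> (A *v x) \<bullet> x"
    using symmetric_matrix_min_Rayleigh[OF assms(1)] by blast
  then show ?thesis using assms(2) mult_right_mono[of lo m "x \<bullet> x"] by fastforce
qed

lemma symmetric_matrix_norm_bound:
  fixes A :: "real^'n^'n"
  assumes sym: "transpose A = A" and eig: "\<And>c. is_eigenvalue A c \<Longrightarrow> 0 \<le> c \<and> c \<le> hi"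
  shows "norm (A *v x) \<le> hi * norm x"
proof -
  obtain M where "is_eigenvalue A M" and max: "\<And>x. (A *v x) \<bullet> x \<le> M * (x \<bullet> x)"
    using symmetric_matrix_max_Rayleigh[OF sym] by blast
  then have "0 \<le> M" "M \<le> hi" using eig by auto
  have upper: "(A *v z) \<bullet> z \<le> hi * (z \<bullet> z)" for z
    using max[of z] mult_right_mono[OF \<open>M \<le> hi\<close> inner_ge_zero[of z]] by linarith
  have psd: "0 \<le> (A *v z) \<bullet> z" for z
    using symmetric_matrix_coercive[OF sym, of 0 z] eig by simp
  define y where "y = A *v x"
  have "(norm y)\<^sup>2 = (A *v x) \<bullet> y" by (simp add: y_def power2_norm_eq_inner)
  then have "(norm y)\<^sup>2 * (norm y)\<^sup>2 = ((A *v x) \<bullet> y)\<^sup>2" by (simp add: power2_eq_square)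
  also have "\<dots> \<le> ((A *v x) \<bullet> x) * ((A *v y) \<bullet> y)"
    by (rule self_adjoint_psd_Cauchy_Schwarz[where b = "\<lambda>x. A *v x"])
       (simp, rule symmetric_matrix_adjoint[OF sym], rule psd)
  also have "\<dots> \<le> (hi * (x \<bullet> x)) * (hi * (y \<bullet> y))"
    by (intro mult_mono upper psd) (use \<open>0 \<le> M\<close> \<open>M \<le> hi\<close> in auto)
  also have "\<dots> = (hi * norm x)\<^sup>2 * (norm y)\<^sup>2"
    by (simp add: dot_square_norm power_mult_distrib power2_eq_square)
  finally have "(norm y)\<^sup>2 \<le> (hi * norm x)\<^sup>2"
    by (cases "norm y = 0") (auto simp: power2_eq_square)
  then show ?thesis unfolding y_def
    by (rule power2_le_imp_le) (use \<open>0 \<le> M\<close> \<open>M \<le> hi\<close> in auto)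
qed

lemma inner_pos_on_sphere_imp_zero:
  fixes G :: "'a::euclidean_space \<Rightarrow> 'a"
  assumes R: "R > 0" and cont: "continuous_on (cball 0 R) G"
    and inward: "\<And>y. norm y = R \<Longrightarrow> G y \<bullet> y > 0"
  shows "\<exists>y\<in>cball 0 R. G y = 0"
proof -
  \<comment> \<open>Brouwer for the radial retraction of \<open>y - G y\<close>: a fixed point on the sphere would make
      \<open>G y\<close> a non-positive multiple of \<open>y\<close>\<close>
  define c where "c y = R / max R (norm (y - G y))" for y
  define f where "f y = c y *\<^sub>R (y - G y)" for y
  have c: "0 < c y" "c y \<le> 1" for y using R by (auto simp: c_def field_simps)
  have cont_f: "continuous_on (cball 0 R) f"
    unfolding f_def c_def using R by (intro continuous_intros cont) auto
  have maps: "f \<in> cball 0 R \<rightarrow> cball 0 R"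
  proof
    fix y :: 'a
    have "norm (f y) = R / max R (norm (y - G y)) * norm (y - G y)"
      using R by (simp add: f_def c_def)
    also have "\<dots> \<le> R" using R by (auto simp: field_simps max_def)
    finally show "f y \<in> cball 0 R" by simp
  qed
  obtain y where y: "y \<in> cball 0 R" "f y = y" using brouwer_ball[OF R cont_f maps] by blast
  have eq: "c y *\<^sub>R G y = (c y - 1) *\<^sub>R y" using y(2) by (simp add: f_def algebra_simps)
  show ?thesis
  proof (cases "c y = 1")
    case True
    then show ?thesis using eq y(1) by auto
  next
    case False
    then have "norm (y - G y) > R" using R by (auto simp: c_def max_def split: if_splits)
    moreover have "norm y = c y * norm (y - G y)"
      using arg_cong[OF y(2), of norm] c[of y] by (simp add: f_def)
    ultimately have "norm y = R" using R by (auto simp: c_def)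
    then have "c y * (G y \<bullet> y) > 0" using inward c[of y] by simp
    moreover have "c y * (G y \<bullet> y) = (c y - 1) * (y \<bullet> y)"
      using arg_cong[OF eq, of "\<lambda>z. z \<bullet> y"] by simp
    moreover have "(c y - 1) * (y \<bullet> y) \<le> 0"
      using c[of y] by (simp add: mult_nonpos_nonneg)
    ultimately show ?thesis by linarith
  qed
qed

lemma L2_integrable_inner:
  fixes f g :: "real^'n \<Rightarrow> 'b::euclidean_space"
  assumes "L2 \<Omega> f" "L2 \<Omega> g"
  shows "integrable (lebesgue_on \<Omega>) (\<lambda>x. f x \<bullet> g x)"
proof (rule Bochner_Integration.integrable_bound[where f = "\<lambda>x. (norm (f x))\<^sup>2 + (norm (g x))\<^sup>2"])
  show "integrable (lebesgue_on \<Omega>) (\<lambda>x. (norm (f x))\<^sup>2 + (norm (g x))\<^sup>2)"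
    using assms unfolding L2_def by simp
  show "(\<lambda>x. f x \<bullet> g x) \<in> borel_measurable (lebesgue_on \<Omega>)"
    using assms unfolding L2_def by (intro borel_measurable_inner) auto
  show "AE x in lebesgue_on \<Omega>. norm (f x \<bullet> g x) \<le> norm ((norm (f x))\<^sup>2 + (norm (g x))\<^sup>2)"
  proof (rule AE_I2)
    fix x
    have "\<bar>f x \<bullet> g x\<bar> \<le> norm (f x) * norm (g x)" by (rule Cauchy_Schwarz_ineq2)
    moreover have "0 \<le> (norm (f x) - norm (g x))\<^sup>2" by simp
    ultimately show "norm (f x \<bullet> g x) \<le> norm ((norm (f x))\<^sup>2 + (norm (g x))\<^sup>2)"
      by (simp add: power2_eq_square algebra_simps)
  qed
qed

lemma L2_integrable_mult:
  fixes f g :: "real^'n \<Rightarrow> real"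
  assumes "L2 \<Omega> f" "L2 \<Omega> g"
  shows "integrable (lebesgue_on \<Omega>) (\<lambda>x. f x * g x)"
  using L2_integrable_inner[OF assms] by simp

lemma borel_measurable_vec_nth:
  fixes f :: "'a \<Rightarrow> 'b::real_normed_vector^'n"
  assumes "f \<in> borel_measurable M"
  shows "(\<lambda>x. f x $ i) \<in> borel_measurable M"
  using borel_measurable_continuous_on[OF linear_continuous_on[OF bounded_linear_vec_nth] assms] .

lemma borel_measurable_vec_lambda:
  fixes f :: "'a \<Rightarrow> real^'n"
  assumes "\<And>i. (\<lambda>x. f x $ i) \<in> borel_measurable M"
  shows "f \<in> borel_measurable M"
proof (rule borel_measurable_euclidean_space[THEN iffD2], rule ballI)
  fix b :: "real^'n" assume "b \<in> Basis"
  then obtain i where b: "b = axis i 1" by (auto simp: Basis_vec_def)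
  show "(\<lambda>x. f x \<bullet> b) \<in> borel_measurable M" using assms[of i] by (simp add: b inner_axis)
qed

lemma borel_measurable_matrix_vector_mult:
  fixes A :: "'a \<Rightarrow> real^'n^'m" and g :: "'a \<Rightarrow> real^'n"
  assumes "A \<in> borel_measurable M" "g \<in> borel_measurable M"
  shows "(\<lambda>x. A x *v g x) \<in> borel_measurable M"
proof (rule borel_measurable_vec_lambda)
  fix i
  have "(\<lambda>x. \<Sum>j\<in>UNIV. A x $ i $ j * g x $ j) \<in> borel_measurable M"
    by (intro borel_measurable_sum borel_measurable_times borel_measurable_vec_nth assms)
  then show "(\<lambda>x. (A x *v g x) $ i) \<in> borel_measurable M"
    by (simp add: matrix_vector_mult_def)
qed

lemma integral_linear_combination_AE:
  fixes f :: "'a \<Rightarrow> real" and g :: "'k \<Rightarrow> 'a \<Rightarrow> real"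
  assumes "finite K" "f \<in> borel_measurable M" "AE x in M. f x = (\<Sum>k\<in>K. c k * g k x)"
    and "\<And>k. k \<in> K \<Longrightarrow> integrable M (g k)"
  shows "integral\<^sup>L M f = (\<Sum>k\<in>K. c k * integral\<^sup>L M (g k))"
proof -
  have "integrable M (\<lambda>x. \<Sum>k\<in>K. c k * g k x)" using assms(4) by auto
  then have "integral\<^sup>L M f = integral\<^sup>L M (\<lambda>x. \<Sum>k\<in>K. c k * g k x)"
    using assms(2,3) by (intro integral_cong_AE) auto
  also have "\<dots> = (\<Sum>k\<in>K. c k * integral\<^sup>L M (g k))"
    using assms(4) by (subst Bochner_Integration.integral_sum) auto
  finally show ?thesis .
qed

lemma mono_diff_mult_nonneg:
  fixes f g :: "real \<Rightarrow> real"
  assumes "mono f" "mono g"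
  shows "0 \<le> (f a - f b) * (g a - g b)"
proof (cases "a \<le> b")
  case True
  then show ?thesis using assms by (auto simp: monoD intro!: mult_nonpos_nonpos)
next
  case False
  then show ?thesis using assms by (auto simp: monoD intro!: mult_nonneg_nonneg)
qed

lemma abs_arctan_le_2: "\<bar>arctan s\<bar> \<le> 2"
  using arctan_bounded[of s] pi_less_4 by linarith

lemma strict_mono_add_arctan:
  fixes \<zeta> :: "real \<Rightarrow> real"
  assumes "mono \<zeta>"
  shows "strict_mono (\<lambda>s. \<zeta> s + arctan s)"
proof (rule strict_monoI)
  fix s t :: real
  assume "s < t"
  then have "\<zeta> s \<le> \<zeta> t" "arctan s < arctan t" using assms by (auto simp: monoD arctan_less_iff)
  then show "\<zeta> s + arctan s < \<zeta> t + arctan t" by simp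
qed

lemma surj_add_arctan:
  fixes \<zeta> :: "real \<Rightarrow> real"
  assumes cont: "continuous_on UNIV \<zeta>" and mono: "mono \<zeta>" and zero: "\<zeta> 0 = 0"
    and M0: "M0 > 0" and growth: "\<And>s. M0 * \<bar>s\<bar> - M1 \<le> \<bar>\<zeta> s\<bar>"
  shows "surj (\<lambda>s. \<zeta> s + arctan s)"
proof -
  define H where "H = (\<lambda>s. \<zeta> s + arctan s)"
  have cont_H: "\<forall>s. isCont H s"
    using cont unfolding H_def continuous_on_eq_continuous_at[OF open_UNIV]
    by (auto intro!: isCont_add isCont_arctan)
  have "\<exists>r. H r = t" for t
  proof -
    define s where "s = (\<bar>t\<bar> + M1 + 2) / M0"
    have "0 \<le> M1" using growth[of 0] zero by simp
    then have s: "0 \<le> s" "M0 * s = \<bar>t\<bar> + M1 + 2" using M0 by (simp_all add: s_def)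
    have "0 \<le> \<zeta> s" "\<zeta> (- s) \<le> 0"
      using monoD[OF mono, of 0 s] monoD[OF mono, of "- s" 0] s(1) zero by simp_all
    then have "M0 * s - M1 \<le> \<zeta> s" "\<zeta> (- s) \<le> M1 - M0 * s"
      using growth[of s] growth[of "- s"] s(1) by simp_all
    then have "H (- s) \<le> t" "t \<le> H s"
      using s(2) abs_arctan_le_2[of s] abs_arctan_le_2[of "- s"] unfolding H_def by linarith+
    then show ?thesis using cont_H IVT[of H "- s" t s] s(1) by auto
  qed
  then show ?thesis unfolding surj_def H_def by metis
qed

lemma continuous_on_inv_strict_mono:
  fixes h :: "real \<Rightarrow> real"
  assumes "strict_mono h" "surj h" "continuous_on UNIV h"
  shows "continuous_on UNIV (inv h)"
proof (rule continuous_at_imp_continuous_on, rule ballI)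
  fix t
  have inv_h: "inv h (h s) = s" for s using assms(1) by (simp add: strict_mono_imp_inj_on inv_f_f)
  have cont: "isCont h s" for s using assms(3) continuous_on_eq_continuous_at[OF open_UNIV] by blast
  have "isCont (inv h) (h (inv h t))"
    by (rule isCont_inverse_function[where d = 1]) (auto simp: inv_h cont)
  then show "isCont (inv h) t" using surj_f_inv_f[OF assms(2)] by simp
qed

lemma quadratic_dominates_affine:
  fixes c K :: real
  assumes "c > 0" "K \<ge> 0"
  obtains R where "R > 0" "K * (R + 1) < c * R\<^sup>2"
proof
  define R where "R = K / c + 1"
  show "R > 0" using assms by (simp add: R_def add_nonneg_pos)
  have "c * R = K + c" using assms by (simp add: R_def field_simps)
  then have "c * R\<^sup>2 - K * (R + 1) = c * R - K" by (simp add: power2_eq_square algebra_simps)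
  then show "K * (R + 1) < c * R\<^sup>2" using \<open>c * R = K + c\<close> assms by simp
qed

lemma sum_UNIV_split_Compl:
  fixes A :: "'a::finite set"
  shows "(\<Sum>i\<in>UNIV. f i) = (\<Sum>i\<in>A. f i) + (\<Sum>i\<in>- A. f i)"
  using sum.subset_diff[of A UNIV f] by (simp add: Compl_eq_Diff_UNIV add.commute)

lemma sum_mult_component_le:
  fixes y :: "real^'i::finite"
  shows "(\<Sum>i\<in>J. b i * y $ i) \<le> (\<Sum>i\<in>J. \<bar>b i\<bar>) * norm y"
  unfolding sum_distrib_right
proof (rule sum_mono)
  fix i
  have "b i * y $ i \<le> \<bar>b i\<bar> * \<bar>y $ i\<bar>" by (metis abs_ge_self abs_mult)
  also have "\<dots> \<le> \<bar>b i\<bar> * norm y" by (rule mult_left_mono[OF component_le_norm_cart]) simp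
  finally show "b i * y $ i \<le> \<bar>b i\<bar> * norm y" .
qed

lemma norm_squared_split_Compl:
  fixes y :: "real^'i::finite"
  shows "(norm y)\<^sup>2 = (\<Sum>i\<in>A. (y $ i)\<^sup>2) + (\<Sum>i\<in>- A. (y $ i)\<^sup>2)"
  unfolding power2_norm_eq_inner inner_vec_def by (simp add: sum_UNIV_split_Compl[of _ A] power2_eq_square)

definition quad_form :: "('i \<Rightarrow> 'i \<Rightarrow> real) \<Rightarrow> 'i set \<Rightarrow> ('i \<Rightarrow> real) \<Rightarrow> real" where
  "quad_form A J z = (\<Sum>j\<in>J. \<Sum>i\<in>J. A j i * z j * z i)"

lemma quad_form_cong: "(\<And>i. i \<in> J \<Longrightarrow> z i = w i) \<Longrightarrow> quad_form A J z = quad_form A J w"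
  unfolding quad_form_def by (intro sum.cong refl) auto

lemma quad_form_scale: "quad_form A J (\<lambda>i. t * z i) = t\<^sup>2 * quad_form A J z"
  unfolding quad_form_def by (simp add: sum_distrib_left power2_eq_square algebra_simps)

lemma quad_form_coercive:
  fixes A :: "'i::finite \<Rightarrow> 'i \<Rightarrow> real"
  assumes pos: "\<And>z. \<exists>i\<in>J. z i \<noteq> 0 \<Longrightarrow> quad_form A J z > 0"
  obtains c where "c > 0" "\<And>z. c * (\<Sum>i\<in>J. (z i)\<^sup>2) \<le> quad_form A J z"
proof (cases "J = {}")
  case True
  then show ?thesis using that[of 1] by (simp add: quad_form_def)
next
  case False
  then obtain k where "k \<in> J" by blast
  \<comment> \<open>minimise over the unit sphere of the coordinates in \<open>J\<close>\<close>
  define S where "S = sphere (0::real^'i) 1 \<inter> (\<Inter>i\<in>-J. {y. y $ i = 0})"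
  have "compact S" unfolding S_def
    by (intro compact_Int_closed compact_sphere closed_INT ballI closed_Collect_eq
        continuous_on_component continuous_on_id continuous_on_const)
  moreover have "axis k (1::real) \<in> S" using \<open>k \<in> J\<close> by (auto simp: S_def) (auto simp: axis_def)
  moreover have "continuous_on S (\<lambda>y. quad_form A J (\<lambda>i. y $ i))"
    unfolding quad_form_def by (intro continuous_intros)
  ultimately obtain y0 where y0: "y0 \<in> S"
    and min: "\<And>y. y \<in> S \<Longrightarrow> quad_form A J (\<lambda>i. y0 $ i) \<le> quad_form A J (\<lambda>i. y $ i)"
    using continuous_attains_inf[of S] by blast
  define c where "c = quad_form A J (\<lambda>i. y0 $ i)"
  have "\<exists>i\<in>J. y0 $ i \<noteq> 0"
  proof (rule ccontr)
    assume "\<not> ?thesis"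
    then have "y0 = 0" using y0 by (auto simp: S_def vec_eq_iff)
    then show False using y0 by (simp add: S_def)
  qed
  then have "c > 0" unfolding c_def by (rule pos)
  moreover have "c * (\<Sum>i\<in>J. (z i)\<^sup>2) \<le> quad_form A J z" for z
  proof -
    define w :: "real^'i" where "w = (\<chi> i. if i \<in> J then z i else 0)"
    have norm_w: "(norm w)\<^sup>2 = (\<Sum>i\<in>J. (z i)\<^sup>2)"
      unfolding norm_squared_split_Compl[of w J] by (simp add: w_def)
    have q: "quad_form A J z = quad_form A J (\<lambda>i. w $ i)" by (rule quad_form_cong) (simp add: w_def)
    show ?thesis
    proof (cases "w = 0")
      case True
      then show ?thesis using norm_w q by (simp add: quad_form_def)
    next
      case False
      then have "w /\<^sub>R norm w \<in> S" by (auto simp: S_def w_def)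
      then have "c \<le> quad_form A J (\<lambda>i. (w /\<^sub>R norm w) $ i)" unfolding c_def by (rule min)
      also have "\<dots> = quad_form A J (\<lambda>i. (1 / norm w) * w $ i)" by (simp add: divide_inverse_commute)
      also have "\<dots> = quad_form A J z / (norm w)\<^sup>2"
        by (simp only: quad_form_scale q) (simp add: power_divide)
      finally have "c \<le> quad_form A J z / (norm w)\<^sup>2" .
      moreover have "(norm w)\<^sup>2 > 0" using False by simp
      ultimately show ?thesis by (simp add: pos_le_divide_eq norm_w)
    qed
  qed
  ultimately show ?thesis by (rule that)
qed

lemma perturbed_quad_form_ge:
  fixes y :: "real^'i::finite" and z a :: "'i \<Rightarrow> real" and A :: "'i \<Rightarrow> 'i \<Rightarrow> real"
  assumes y: "\<And>i. y $ i = z i + a i" and a: "\<And>i. \<bar>a i\<bar> \<le> 2"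
    and coercive: "c * (\<Sum>i\<in>J. (z i)\<^sup>2) \<le> quad_form A J z" and c: "c \<ge> 0"
  defines "SA \<equiv> \<Sum>i\<in>J. \<Sum>j\<in>J. \<bar>A j i\<bar>"
  shows "c * (\<Sum>i\<in>J. (y $ i)\<^sup>2) - (4 * c * card J + 2 * SA) * norm y - 4 * SA
    \<le> (\<Sum>i\<in>J. (\<Sum>j\<in>J. A j i * z j) * y $ i)"
proof -
  define N where "N = norm y"
  have yN: "\<bar>y $ i\<bar> \<le> N" for i unfolding N_def by (rule component_le_norm_cart)
  have "(\<Sum>i\<in>J. (\<Sum>j\<in>J. A j i * z j) * y $ i)
      = (\<Sum>i\<in>J. \<Sum>j\<in>J. A j i * z j * z i) + (\<Sum>i\<in>J. \<Sum>j\<in>J. A j i * z j * a i)"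
    by (simp add: y distrib_left sum_distrib_right sum.distrib)
  also have "(\<Sum>i\<in>J. \<Sum>j\<in>J. A j i * z j * z i) = quad_form A J z"
    unfolding quad_form_def by (rule sum.swap)
  moreover have "c * (\<Sum>i\<in>J. (y $ i)\<^sup>2) - 4 * c * card J * N \<le> c * (\<Sum>i\<in>J. (z i)\<^sup>2)"
  proof -
    have "(y $ i)\<^sup>2 - 4 * N \<le> (z i)\<^sup>2" for i
    proof -
      have "\<bar>y $ i\<bar> * \<bar>a i\<bar> \<le> N * 2" by (rule mult_mono[OF yN a]) (auto simp: N_def)
      then have "y $ i * a i \<le> 2 * N" using abs_ge_self[of "y $ i * a i"] by (simp add: abs_mult)
      moreover have "(z i)\<^sup>2 = (y $ i)\<^sup>2 - 2 * (y $ i * a i) + (a i)\<^sup>2"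
        using y[of i] by (simp add: power2_eq_square algebra_simps)
      ultimately show ?thesis using zero_le_power2[of "a i"] by linarith
    qed
    then have "(\<Sum>i\<in>J. (y $ i)\<^sup>2 - 4 * N) \<le> (\<Sum>i\<in>J. (z i)\<^sup>2)" by (intro sum_mono)
    then have "(\<Sum>i\<in>J. (y $ i)\<^sup>2) - 4 * N * card J \<le> (\<Sum>i\<in>J. (z i)\<^sup>2)"
      by (simp add: sum_subtractf mult.commute)
    from mult_left_mono[OF this c] show ?thesis by (simp add: algebra_simps)
  qed
  moreover have "- (SA * (2 * N + 4)) \<le> (\<Sum>i\<in>J. \<Sum>j\<in>J. A j i * z j * a i)"
  proof -
    have "- (\<bar>A j i\<bar> * (2 * N + 4)) \<le> A j i * z j * a i" for i j
    proof -
      have "\<bar>z j\<bar> \<le> N + 2" using y[of j] yN[of j] a[of j] by linarith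
      then have "\<bar>A j i * z j * a i\<bar> \<le> \<bar>A j i\<bar> * ((N + 2) * 2)"
        unfolding abs_mult mult.assoc using a[of i] by (intro mult_left_mono mult_mono) auto
      then show ?thesis by (simp add: algebra_simps)
    qed
    then have "(\<Sum>i\<in>J. \<Sum>j\<in>J. - (\<bar>A j i\<bar> * (2 * N + 4))) \<le> (\<Sum>i\<in>J. \<Sum>j\<in>J. A j i * z j * a i)"
      by (intro sum_mono)
    then show ?thesis by (simp add: SA_def sum_negf sum_distrib_right)
  qed
  ultimately show ?thesis using coercive unfolding N_def by (simp add: algebra_simps)
qed

section \<open>Gradient discretisations with piecewise constant reconstruction\<close>

locale gradient_discretisation =
  fixes \<Omega> :: "(real^'n) set" and Ib :: "'i::finite set"
    and U :: "'i \<Rightarrow> (real^'n) set" and gradD :: "('i \<Rightarrow> real) \<Rightarrow> real^'n \<Rightarrow> real^'n"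
  assumes U_disjoint: "\<And>i j. i \<noteq> j \<Longrightarrow> U i \<inter> U j = {}"
    and U_cover: "(\<Union>i. U i) = \<Omega>"
    and PiD_L2: "\<And>v. v \<in> XD0 Ib \<Longrightarrow> L2 \<Omega> (PiD U v)"
    and gradD_L2: "\<And>v. v \<in> XD0 Ib \<Longrightarrow> L2 \<Omega> (gradD v)"
    and gradD_linear: "\<And>a b v w. v \<in> XD0 Ib \<Longrightarrow> w \<in> XD0 Ib \<Longrightarrow>
        AE x in lebesgue_on \<Omega>. gradD (\<lambda>i. a * v i + b * w i) x = a *\<^sub>R gradD v x + b *\<^sub>R gradD w x"
    and gradD_norm: "\<And>v. v \<in> XD0 Ib \<Longrightarrow>
        integral\<^sup>L (lebesgue_on \<Omega>) (\<lambda>x. (norm (gradD v x))\<^sup>2) = 0 \<Longrightarrow> v = (\<lambda>i. 0)"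
begin

abbreviation "\<mu> \<equiv> lebesgue_on \<Omega>"

abbreviation "Iint \<equiv> - Ib"

definition dof :: "'i \<Rightarrow> 'i \<Rightarrow> real" where
  "dof i = (\<lambda>j. if j = i then 1 else 0)"

lemma dof_XD0: "i \<in> Iint \<Longrightarrow> dof i \<in> XD0 Ib"
  by (auto simp: dof_def XD0_def)

lemma XD0_dof_expansion:
  assumes "v \<in> XD0 Ib"
  shows "v = (\<lambda>j. \<Sum>i\<in>Iint. v i * dof i j)"
proof
  fix j
  show "v j = (\<Sum>i\<in>Iint. v i * dof i j)"
    using assms by (cases "j \<in> Ib") (auto simp: XD0_def dof_def if_distrib cong: if_cong)
qed

lemma PiD_cell: "x \<in> U k \<Longrightarrow> PiD U v x = v k"
  unfolding PiD_def using U_disjoint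
  by (subst sum.mono_neutral_right[of UNIV "{k}"]) (auto simp: indicator_def)

lemma PiD_dof: "PiD U (dof i) x = indicator (U i) x"
proof -
  have "(\<lambda>j. dof i j * indicator (U j) x) = (\<lambda>j. if j = i then indicator (U i) x else 0)"
    by (auto simp: dof_def)
  then show ?thesis unfolding PiD_def by (simp only:) simp
qed

lemma PiD_expansion:
  assumes "v \<in> XD0 Ib"
  shows "PiD U v x = (\<Sum>i\<in>Iint. v i * indicator (U i) x)"
  unfolding PiD_def using assms by (intro sum.mono_neutral_right) (auto simp: XD0_def)

lemma PiD_measurable: "v \<in> XD0 Ib \<Longrightarrow> PiD U v \<in> borel_measurable \<mu>"
  using PiD_L2 by (simp add: L2_def)

lemma gradD_measurable: "v \<in> XD0 Ib \<Longrightarrow> gradD v \<in> borel_measurable \<mu>"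
  using gradD_L2 by (simp add: L2_def)

lemma integrable_cell:
  assumes "i \<in> Iint"
  shows "integrable \<mu> (\<lambda>x. indicator (U i) x :: real)"
proof -
  have "(norm (indicator (U i) x :: real))\<^sup>2 = indicator (U i) x" for x by (simp add: indicator_def)
  then show ?thesis using PiD_L2[OF dof_XD0[OF assms]] by (simp add: L2_def PiD_dof)
qed

lemma gradD_sum:
  assumes "S \<subseteq> Iint"
  shows "AE x in \<mu>. gradD (\<lambda>j. \<Sum>i\<in>S. c i * dof i j) x = (\<Sum>i\<in>S. c i *\<^sub>R gradD (dof i) x)"
  using finite[of S] assms
proof (induction S rule: finite_induct)
  case empty
  then show ?case using gradD_linear[of "\<lambda>i. 0" "\<lambda>i. 0" 0 0] by (simp add: XD0_def)
next
  case (insert k S)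
  define w where "w = (\<lambda>j. \<Sum>i\<in>S. c i * dof i j)"
  have "w \<in> XD0 Ib" using insert.prems by (auto simp: w_def XD0_def dof_def intro!: sum.neutral)
  moreover have "(\<lambda>j. \<Sum>i\<in>insert k S. c i * dof i j) = (\<lambda>j. 1 * w j + c k * dof k j)"
    using insert.hyps by (auto simp: w_def)
  ultimately show ?case
    using gradD_linear[of w "dof k" 1 "c k"] dof_XD0[of k] insert
    by (auto elim!: AE_mp[OF AE_conjI] simp: w_def)
qed

lemma gradD_expansion:
  assumes "v \<in> XD0 Ib"
  shows "AE x in \<mu>. gradD v x = (\<Sum>i\<in>Iint. v i *\<^sub>R gradD (dof i) x)"
  using gradD_sum[of Iint v] XD0_dof_expansion[OF assms] by simp

lemma integral_PiD_expansion:
  assumes v: "v \<in> XD0 Ib" and g: "g \<in> borel_measurable \<mu>"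
    and int: "\<And>i. i \<in> Iint \<Longrightarrow> integrable \<mu> (\<lambda>x. g x * indicator (U i) x)"
  shows "(\<integral>x. g x * PiD U v x \<partial>\<mu>) = (\<Sum>i\<in>Iint. v i * (\<integral>x. g x * indicator (U i) x \<partial>\<mu>))"
proof (rule integral_linear_combination_AE)
  show "(\<lambda>x. g x * PiD U v x) \<in> borel_measurable \<mu>"
    using g PiD_measurable[OF v] by measurable
  show "AE x in \<mu>. g x * PiD U v x = (\<Sum>i\<in>Iint. v i * (g x * indicator (U i) x))"
    by (intro AE_I2) (simp only: PiD_expansion[OF v] sum_distrib_left mult.left_commute)
qed (use int in auto)

lemma integral_gradD_expansion:
  assumes v: "v \<in> XD0 Ib" and G: "L2 \<Omega> G"
  shows "(\<integral>x. G x \<bullet> gradD v x \<partial>\<mu>) = (\<Sum>i\<in>Iint. v i * (\<integral>x. G x \<bullet> gradD (dof i) x \<partial>\<mu>))"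
proof (rule integral_linear_combination_AE)
  show "(\<lambda>x. G x \<bullet> gradD v x) \<in> borel_measurable \<mu>"
    using G gradD_measurable[OF v] by (intro borel_measurable_inner) (auto simp: L2_def)
  show "AE x in \<mu>. G x \<bullet> gradD v x = (\<Sum>i\<in>Iint. v i * (G x \<bullet> gradD (dof i) x))"
    using gradD_expansion[OF v] by eventually_elim (simp add: inner_sum_right)
qed (auto intro!: L2_integrable_inner G gradD_L2 dof_XD0)

end

section \<open>The gradient scheme as a finite system\<close>

locale gradient_scheme = gradient_discretisation \<Omega> Ib U gradD
  for \<Omega> :: "(real^'n) set" and Ib :: "'i::finite set" and U gradD +
  fixes \<zeta> \<beta> :: "real \<Rightarrow> real" and M0 M1 lo hi :: real
    and \<Lambda> :: "real^'n \<Rightarrow> real^'n^'n" and Qf :: "real^'n \<Rightarrow> real" and F :: "real^'n \<Rightarrow> real^'n"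
  assumes \<zeta>_cont: "continuous_on UNIV \<zeta>" and \<zeta>_mono: "mono \<zeta>" and \<zeta>_0: "\<zeta> 0 = 0"
    and M0: "M0 > 0" and \<zeta>_growth: "\<And>s. M0 * \<bar>s\<bar> - M1 \<le> \<bar>\<zeta> s\<bar>"
    and \<beta>_cont: "continuous_on UNIV \<beta>" and \<beta>_mono: "mono \<beta>" and \<beta>_0: "\<beta> 0 = 0"
    and \<beta>_plus_\<zeta>_strict: "strict_mono (\<lambda>s. \<beta> s + \<zeta> s)"
    and \<Lambda>_measurable: "\<Lambda> \<in> borel_measurable (lebesgue_on \<Omega>)"
    and lo: "lo > 0"
    and \<Lambda>_symmetric: "AE x in lebesgue_on \<Omega>. transpose (\<Lambda> x) = \<Lambda> x"
    and \<Lambda>_eigenvalues: "AE x in lebesgue_on \<Omega>. \<forall>c. is_eigenvalue (\<Lambda> x) c \<longrightarrow> lo \<le> c \<and> c \<le> hi"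
    and Qf_L2: "L2 \<Omega> Qf" and F_L2: "L2 \<Omega> F"
begin

lemma \<Lambda>_coercive: "AE x in \<mu>. \<forall>w. lo * (w \<bullet> w) \<le> (\<Lambda> x *v w) \<bullet> w"
  using \<Lambda>_symmetric \<Lambda>_eigenvalues by eventually_elim (auto intro: symmetric_matrix_coercive)

lemma \<Lambda>_bounded: "AE x in \<mu>. \<forall>w. norm (\<Lambda> x *v w) \<le> hi * norm w"
  using \<Lambda>_symmetric \<Lambda>_eigenvalues
  by eventually_elim (use lo in \<open>auto intro!: symmetric_matrix_norm_bound\<close>)

lemma L2_\<Lambda>_mult:
  assumes "L2 \<Omega> g"
  shows "L2 \<Omega> (\<lambda>x. \<Lambda> x *v g x)"
proof -
  have g: "g \<in> borel_measurable \<mu>" "integrable \<mu> (\<lambda>x. (norm (g x))\<^sup>2)"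
    using assms by (auto simp: L2_def)
  have meas: "(\<lambda>x. \<Lambda> x *v g x) \<in> borel_measurable \<mu>"
    by (rule borel_measurable_matrix_vector_mult[OF \<Lambda>_measurable g(1)])
  have "integrable \<mu> (\<lambda>x. (norm (\<Lambda> x *v g x))\<^sup>2)"
  proof (rule Bochner_Integration.integrable_bound[where f = "\<lambda>x. hi\<^sup>2 * (norm (g x))\<^sup>2"])
    show "integrable \<mu> (\<lambda>x. hi\<^sup>2 * (norm (g x))\<^sup>2)" using g(2) by simp
    show "(\<lambda>x. (norm (\<Lambda> x *v g x))\<^sup>2) \<in> borel_measurable \<mu>" using meas by measurable
    show "AE x in \<mu>. norm ((norm (\<Lambda> x *v g x))\<^sup>2) \<le> norm (hi\<^sup>2 * (norm (g x))\<^sup>2)"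
      using \<Lambda>_bounded
    proof eventually_elim
      case (elim x)
      then have "(norm (\<Lambda> x *v g x))\<^sup>2 \<le> (hi * norm (g x))\<^sup>2" by (intro power_mono) auto
      then show ?case by (simp add: power_mult_distrib)
    qed
  qed
  with meas show ?thesis by (simp add: L2_def)
qed

definition residual :: "('i \<Rightarrow> real) \<Rightarrow> ('i \<Rightarrow> real) \<Rightarrow> real" where
  "residual u v = (\<integral>x. \<beta> (PiD U u x) * PiD U v x \<partial>\<mu>)
      + (\<integral>x. (\<Lambda> x *v gradD (compw \<zeta> u) x) \<bullet> gradD v x \<partial>\<mu>)
      - ((\<integral>x. Qf x * PiD U v x \<partial>\<mu>) - (\<integral>x. F x \<bullet> gradD v x \<partial>\<mu>))"

definition mass :: "'i \<Rightarrow> real" where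
  "mass i = (\<integral>x. indicator (U i) x \<partial>\<mu>)"

definition stiffness :: "'i \<Rightarrow> 'i \<Rightarrow> real" where
  "stiffness j i = (\<integral>x. (\<Lambda> x *v gradD (dof j) x) \<bullet> gradD (dof i) x \<partial>\<mu>)"

definition load :: "'i \<Rightarrow> real" where
  "load i = (\<integral>x. Qf x * indicator (U i) x \<partial>\<mu>) - (\<integral>x. F x \<bullet> gradD (dof i) x \<partial>\<mu>)"

lemma mass_nonneg: "0 \<le> mass i"
  unfolding mass_def by (rule integral_nonneg_AE) simp

lemma compw_XD0: "u \<in> XD0 Ib \<Longrightarrow> compw \<zeta> u \<in> XD0 Ib"
  by (auto simp: compw_def XD0_def \<zeta>_0)

lemma integral_\<Lambda>_gradD:
  assumes w: "w \<in> XD0 Ib" and z: "z \<in> XD0 Ib"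
  shows "(\<integral>x. (\<Lambda> x *v gradD w x) \<bullet> gradD z x \<partial>\<mu>)
    = (\<Sum>j\<in>Iint. \<Sum>i\<in>Iint. stiffness j i * w j * z i)"
proof -
  have "(\<integral>x. (\<Lambda> x *v gradD w x) \<bullet> gradD z x \<partial>\<mu>)
      = (\<Sum>p\<in>Iint \<times> Iint. (w (fst p) * z (snd p)) * stiffness (fst p) (snd p))"
    unfolding stiffness_def
  proof (rule integral_linear_combination_AE)
    show "(\<lambda>x. (\<Lambda> x *v gradD w x) \<bullet> gradD z x) \<in> borel_measurable \<mu>"
      by (intro borel_measurable_inner borel_measurable_matrix_vector_mult \<Lambda>_measurable
          gradD_measurable w z)
    show "AE x in \<mu>. (\<Lambda> x *v gradD w x) \<bullet> gradD z x
        = (\<Sum>p\<in>Iint \<times> Iint. (w (fst p) * z (snd p))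
            * ((\<Lambda> x *v gradD (dof (fst p)) x) \<bullet> gradD (dof (snd p)) x))"
      using gradD_expansion[OF w] gradD_expansion[OF z]
    proof eventually_elim
      case (elim x)
      have "\<Lambda> x *v gradD w x = (\<Sum>j\<in>Iint. w j *\<^sub>R (\<Lambda> x *v gradD (dof j) x))"
        unfolding elim(1) by (simp add: linear_sum[OF matrix_vector_mul_linear] matrix_vector_mult_scaleR)
      then have "(\<Lambda> x *v gradD w x) \<bullet> gradD z x
          = (\<Sum>j\<in>Iint. \<Sum>i\<in>Iint. (w j * z i) * ((\<Lambda> x *v gradD (dof j) x) \<bullet> gradD (dof i) x))"
        unfolding elim(2) by (subst sum.swap) (simp add: inner_sum_left inner_sum_right sum_distrib_left algebra_simps)
      then show ?case by (simp add: sum.cartesian_product case_prod_beta)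
    qed
  qed (auto intro!: L2_integrable_inner L2_\<Lambda>_mult gradD_L2 dof_XD0)
  then show ?thesis by (simp add: sum.cartesian_product case_prod_beta algebra_simps)
qed

lemma quad_form_stiffness:
  "z \<in> XD0 Ib \<Longrightarrow> quad_form stiffness Iint z = (\<integral>x. (\<Lambda> x *v gradD z x) \<bullet> gradD z x \<partial>\<mu>)"
  by (simp add: integral_\<Lambda>_gradD quad_form_def)

lemma stiffness_pos_def:
  assumes "\<exists>i\<in>Iint. z i \<noteq> 0"
  shows "quad_form stiffness Iint z > 0"
proof -
  define z' where "z' i = (if i \<in> Ib then 0 else z i)" for i
  have z': "z' \<in> XD0 Ib" "z' \<noteq> (\<lambda>i. 0)" using assms by (auto simp: z'_def XD0_def fun_eq_iff)
  have "quad_form stiffness Iint z = quad_form stiffness Iint z'"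
    by (rule quad_form_cong) (simp add: z'_def)
  also have "\<dots> = (\<integral>x. (\<Lambda> x *v gradD z' x) \<bullet> gradD z' x \<partial>\<mu>)" by (rule quad_form_stiffness[OF z'(1)])
  also have "\<dots> \<ge> (\<integral>x. lo * (norm (gradD z' x))\<^sup>2 \<partial>\<mu>)"
  proof (rule integral_mono_AE)
    show "integrable \<mu> (\<lambda>x. lo * (norm (gradD z' x))\<^sup>2)"
      using gradD_L2[OF z'(1)] by (simp add: L2_def)
    show "integrable \<mu> (\<lambda>x. (\<Lambda> x *v gradD z' x) \<bullet> gradD z' x)"
      by (intro L2_integrable_inner L2_\<Lambda>_mult gradD_L2 z'(1))
    show "AE x in \<mu>. lo * (norm (gradD z' x))\<^sup>2 \<le> (\<Lambda> x *v gradD z' x) \<bullet> gradD z' x"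
      using \<Lambda>_coercive by eventually_elim (simp add: power2_norm_eq_inner)
  qed
  finally have "lo * (\<integral>x. (norm (gradD z' x))\<^sup>2 \<partial>\<mu>) \<le> quad_form stiffness Iint z" by simp
  moreover have "(\<integral>x. (norm (gradD z' x))\<^sup>2 \<partial>\<mu>) > 0"
    using gradD_norm[OF z'(1)] z'(2) integral_nonneg_AE[of "\<lambda>x. (norm (gradD z' x))\<^sup>2" \<mu>]
    by fastforce
  ultimately show ?thesis using mult_pos_pos[OF lo] by (meson less_le_trans)
qed

lemma residual_expansion:
  assumes u: "u \<in> XD0 Ib" and v: "v \<in> XD0 Ib"
  shows "residual u v = (\<Sum>i\<in>Iint. v i * residual u (dof i))"
proof -
  have \<beta>_cell: "\<beta> (PiD U u x) * indicator (U i) x = \<beta> (u i) * indicator (U i) x" for i x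
    by (cases "x \<in> U i") (simp_all add: PiD_cell)
  have "(\<integral>x. \<beta> (PiD U u x) * PiD U v x \<partial>\<mu>)
      = (\<Sum>i\<in>Iint. v i * (\<integral>x. \<beta> (PiD U u x) * indicator (U i) x \<partial>\<mu>))"
    by (rule integral_PiD_expansion[OF v])
      (simp_all add: \<beta>_cell integrable_cell borel_measurable_continuous_on[OF \<beta>_cont PiD_measurable[OF u]])
  moreover have "(\<integral>x. Qf x * PiD U v x \<partial>\<mu>) = (\<Sum>i\<in>Iint. v i * (\<integral>x. Qf x * indicator (U i) x \<partial>\<mu>))"
    by (rule integral_PiD_expansion[OF v])
      (use Qf_L2 L2_integrable_mult[OF Qf_L2 PiD_L2[OF dof_XD0]] in \<open>auto simp: L2_def PiD_dof\<close>)
  moreover have "(\<integral>x. (\<Lambda> x *v gradD (compw \<zeta> u) x) \<bullet> gradD v x \<partial>\<mu>)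
      = (\<Sum>i\<in>Iint. v i * (\<integral>x. (\<Lambda> x *v gradD (compw \<zeta> u) x) \<bullet> gradD (dof i) x \<partial>\<mu>))"
    by (intro integral_gradD_expansion v L2_\<Lambda>_mult gradD_L2 compw_XD0 u)
  moreover have "(\<integral>x. F x \<bullet> gradD v x \<partial>\<mu>) = (\<Sum>i\<in>Iint. v i * (\<integral>x. F x \<bullet> gradD (dof i) x \<partial>\<mu>))"
    by (intro integral_gradD_expansion v F_L2)
  ultimately show ?thesis
    unfolding residual_def by (simp add: PiD_dof sum.distrib sum_subtractf algebra_simps)
qed

lemma residual_dof:
  assumes u: "u \<in> XD0 Ib" and i: "i \<in> Iint"
  shows "residual u (dof i) = mass i * \<beta> (u i) + (\<Sum>j\<in>Iint. stiffness j i * \<zeta> (u j)) - load i"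
proof -
  have "(\<integral>x. \<beta> (PiD U u x) * indicator (U i) x \<partial>\<mu>) = \<beta> (u i) * mass i"
    unfolding mass_def by (subst integral_mult_right_zero[symmetric])
      (intro Bochner_Integration.integral_cong refl, simp add: indicator_def PiD_cell)
  moreover have "(\<integral>x. (\<Lambda> x *v gradD (compw \<zeta> u) x) \<bullet> gradD (dof i) x \<partial>\<mu>)
      = (\<Sum>j\<in>Iint. stiffness j i * \<zeta> (u j))"
  proof -
    have "(\<Sum>k\<in>Iint. stiffness j k * \<zeta> (u j) * dof i k) = stiffness j i * \<zeta> (u j)" for j
    proof -
      have "(\<Sum>k\<in>Iint. stiffness j k * \<zeta> (u j) * dof i k)
          = (\<Sum>k\<in>Iint. if k = i then stiffness j i * \<zeta> (u j) else 0)"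
        by (rule sum.cong) (auto simp: dof_def)
      also have "\<dots> = stiffness j i * \<zeta> (u j)" using i by simp
      finally show ?thesis .
    qed
    then show ?thesis
      using integral_\<Lambda>_gradD[OF compw_XD0[OF u] dof_XD0[OF i]] i by (simp add: compw_def)
  qed
  ultimately show ?thesis unfolding residual_def load_def by (simp add: PiD_dof)
qed

lemma GS_solution_iff:
  "is_GS_solution \<Omega> Ib U gradD \<beta> \<zeta> \<Lambda> Qf F u \<longleftrightarrow>
    u \<in> XD0 Ib \<and> (\<forall>i\<in>Iint. mass i * \<beta> (u i) + (\<Sum>j\<in>Iint. stiffness j i * \<zeta> (u j)) = load i)"
proof -
  have "is_GS_solution \<Omega> Ib U gradD \<beta> \<zeta> \<Lambda> Qf F u \<longleftrightarrow> u \<in> XD0 Ib \<and> (\<forall>v\<in>XD0 Ib. residual u v = 0)"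
    by (simp add: is_GS_solution_def residual_def)
  also have "\<dots> \<longleftrightarrow> u \<in> XD0 Ib \<and> (\<forall>i\<in>Iint. residual u (dof i) = 0)"
    using residual_expansion dof_XD0 by auto
  finally show ?thesis by (auto simp: residual_dof)
qed

section \<open>Existence\<close>

definition Hinv :: "real \<Rightarrow> real" where
  "Hinv = inv (\<lambda>s. \<zeta> s + arctan s)"

lemma Hinv_inverse: "\<zeta> (Hinv t) + arctan (Hinv t) = t"
  using surj_f_inv_f[OF surj_add_arctan[OF \<zeta>_cont \<zeta>_mono \<zeta>_0 M0 \<zeta>_growth]] by (simp add: Hinv_def)

lemma Hinv_0: "Hinv 0 = 0"
  using inv_f_f[OF strict_mono_imp_inj_on[OF strict_mono_add_arctan[OF \<zeta>_mono]], of 0]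
  by (simp add: Hinv_def \<zeta>_0)

lemma continuous_Hinv: "continuous_on UNIV Hinv"
  unfolding Hinv_def using \<zeta>_cont
  by (intro continuous_on_inv_strict_mono strict_mono_add_arctan \<zeta>_mono
      surj_add_arctan[OF \<zeta>_cont \<zeta>_mono \<zeta>_0 M0 \<zeta>_growth]) (auto intro!: continuous_intros)

lemma \<beta>_Hinv_mult_nonneg: "0 \<le> \<beta> (Hinv t) * t"
  using mono_diff_mult_nonneg[OF \<beta>_mono strict_mono_mono[OF strict_mono_add_arctan[OF \<zeta>_mono]],
      of "Hinv t" 0]
  by (simp add: Hinv_inverse \<beta>_0 \<zeta>_0)

definition discrete_map :: "real^'i \<Rightarrow> real^'i" where
  "discrete_map y = (\<chi> i. if i \<in> Iint
     then mass i * \<beta> (Hinv (y $ i)) + (\<Sum>j\<in>Iint. stiffness j i * \<zeta> (Hinv (y $ j))) - load i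
     else y $ i)"

lemma continuous_discrete_map: "continuous_on S discrete_map"
proof -
  have "continuous_on S (\<lambda>y. g (Hinv (y $ i)))" if "continuous_on UNIV g" for g and i :: 'i
    by (rule continuous_on_compose2[OF that continuous_on_compose2[OF continuous_Hinv]])
      (auto intro: continuous_on_component continuous_on_id)
  note [continuous_intros] = this[OF \<beta>_cont] this[OF \<zeta>_cont]
  show ?thesis unfolding discrete_map_def
  proof (rule continuous_on_vec_lambda)
    fix i
    show "continuous_on S (\<lambda>y. if i \<in> Iint
        then mass i * \<beta> (Hinv (y $ i)) + (\<Sum>j\<in>Iint. stiffness j i * \<zeta> (Hinv (y $ j))) - load i
        else y $ i)"
      by (cases "i \<in> Iint") (auto intro!: continuous_intros continuous_on_component)
  qed
qed

lemma inner_discrete_map: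
  "discrete_map y \<bullet> y = (\<Sum>i\<in>Ib. (y $ i)\<^sup>2)
      + (\<Sum>i\<in>Iint. mass i * \<beta> (Hinv (y $ i)) * y $ i)
      + (\<Sum>i\<in>Iint. (\<Sum>j\<in>Iint. stiffness j i * \<zeta> (Hinv (y $ j))) * y $ i)
      - (\<Sum>i\<in>Iint. load i * y $ i)"
  unfolding inner_vec_def discrete_map_def
  by (simp add: sum_UNIV_split_Compl[of _ Ib] power2_eq_square sum.distrib sum_subtractf algebra_simps)

lemma discrete_map_coercive:
  obtains c K where "c > 0" "K \<ge> 0" "\<And>y. c * (norm y)\<^sup>2 - K * (norm y + 1) \<le> discrete_map y \<bullet> y"
proof -
  obtain c where c: "c > 0" and coercive: "\<And>z. c * (\<Sum>i\<in>Iint. (z i)\<^sup>2) \<le> quad_form stiffness Iint z"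
    using quad_form_coercive[of Iint stiffness] stiffness_pos_def by blast
  define SA where "SA = (\<Sum>i\<in>Iint. \<Sum>j\<in>Iint. \<bar>stiffness j i\<bar>)"
  define SB where "SB = (\<Sum>i\<in>Iint. \<bar>load i\<bar>)"
  have "0 \<le> SA" "0 \<le> SB" unfolding SA_def SB_def by (auto intro!: sum_nonneg)
  have "min c 1 * (norm y)\<^sup>2 - (4 * c * card Iint + 4 * SA + SB) * (norm y + 1) \<le> discrete_map y \<bullet> y"
    for y
  proof -
    \<comment> \<open>\<open>y\<close> is a bounded perturbation of \<open>\<zeta>(u)\<close>, which controls the stiffness term\<close>
    have "c * (\<Sum>i\<in>Iint. (y $ i)\<^sup>2) - (4 * c * card Iint + 2 * SA) * norm y - 4 * SA
        \<le> (\<Sum>i\<in>Iint. (\<Sum>j\<in>Iint. stiffness j i * \<zeta> (Hinv (y $ j))) * y $ i)"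
      unfolding SA_def
    proof (rule perturbed_quad_form_ge[where a = "\<lambda>i. arctan (Hinv (y $ i))"])
      show "y $ i = \<zeta> (Hinv (y $ i)) + arctan (Hinv (y $ i))" for i by (simp add: Hinv_inverse)
      show "\<bar>arctan (Hinv (y $ i))\<bar> \<le> 2" for i by (rule abs_arctan_le_2)
    qed (use c coercive in auto)
    moreover have "0 \<le> (\<Sum>i\<in>Iint. mass i * \<beta> (Hinv (y $ i)) * y $ i)"
      by (intro sum_nonneg) (simp add: mult.assoc mass_nonneg \<beta>_Hinv_mult_nonneg)
    moreover have "(\<Sum>i\<in>Iint. load i * y $ i) \<le> SB * norm y"
      unfolding SB_def by (rule sum_mult_component_le)
    moreover have "min c 1 * (norm y)\<^sup>2 \<le> (\<Sum>i\<in>Ib. (y $ i)\<^sup>2) + c * (\<Sum>i\<in>Iint. (y $ i)\<^sup>2)"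
    proof -
      note norm_squared_split_Compl[of y Ib]
      moreover have "min c 1 * (\<Sum>i\<in>Ib. (y $ i)\<^sup>2) \<le> 1 * (\<Sum>i\<in>Ib. (y $ i)\<^sup>2)"
        "min c 1 * (\<Sum>i\<in>Iint. (y $ i)\<^sup>2) \<le> c * (\<Sum>i\<in>Iint. (y $ i)\<^sup>2)"
        by (intro mult_right_mono sum_nonneg; simp)+
      ultimately show ?thesis by (simp add: distrib_left)
    qed
    moreover have "(4 * c * card Iint + 2 * SA + SB) * norm y + 4 * SA
        \<le> (4 * c * card Iint + 4 * SA + SB) * (norm y + 1)"
      by (simp add: algebra_simps)
        (intro add_nonneg_nonneg mult_nonneg_nonneg; use \<open>0 \<le> SA\<close> \<open>0 \<le> SB\<close> c in simp)
    ultimately show ?thesis unfolding inner_discrete_map by (simp add: algebra_simps)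
  qed
  moreover have "0 \<le> 4 * c * card Iint + 4 * SA + SB" using c \<open>0 \<le> SA\<close> \<open>0 \<le> SB\<close> by simp
  ultimately show ?thesis using c by (intro that[of "min c 1"]) auto
qed

theorem GS_solution_exists: "\<exists>u. is_GS_solution \<Omega> Ib U gradD \<beta> \<zeta> \<Lambda> Qf F u"
proof -
  obtain c K where "c > 0" "K \<ge> 0"
    and coercive: "\<And>y. c * (norm y)\<^sup>2 - K * (norm y + 1) \<le> discrete_map y \<bullet> y"
    using discrete_map_coercive by blast
  then obtain R where "R > 0" "K * (R + 1) < c * R\<^sup>2"
    using quadratic_dominates_affine by blast
  then have "discrete_map y \<bullet> y > 0" if "norm y = R" for y using coercive[of y] that by simp
  then obtain y where y: "discrete_map y = 0"
    using inner_pos_on_sphere_imp_zero[of R discrete_map] continuous_discrete_map \<open>R > 0\<close> by blast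
  define u where "u i = Hinv (y $ i)" for i
  have "u \<in> XD0 Ib"
    using y by (auto simp: XD0_def u_def discrete_map_def vec_eq_iff Hinv_0 split: if_splits)
  moreover have "mass i * \<beta> (u i) + (\<Sum>j\<in>Iint. stiffness j i * \<zeta> (u j)) = load i" if "i \<in> Iint" for i
  proof -
    have "discrete_map y $ i = 0" using y by simp
    then show ?thesis using that by (simp add: u_def discrete_map_def)
  qed
  ultimately show ?thesis by (auto simp: GS_solution_iff)
qed

section \<open>Uniqueness\<close>

lemma GS_solution_\<zeta>_unique:
  assumes u1: "is_GS_solution \<Omega> Ib U gradD \<beta> \<zeta> \<Lambda> Qf F u1"
    and u2: "is_GS_solution \<Omega> Ib U gradD \<beta> \<zeta> \<Lambda> Qf F u2"
  shows "compw \<zeta> u1 = compw \<zeta> u2"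
proof -
  define d where "d i = \<zeta> (u1 i) - \<zeta> (u2 i)" for i
  have eq: "mass i * (\<beta> (u1 i) - \<beta> (u2 i)) + (\<Sum>j\<in>Iint. stiffness j i * d j) = 0" if "i \<in> Iint" for i
  proof -
    have "mass i * \<beta> (u1 i) + (\<Sum>j\<in>Iint. stiffness j i * \<zeta> (u1 j)) = load i"
      "mass i * \<beta> (u2 i) + (\<Sum>j\<in>Iint. stiffness j i * \<zeta> (u2 j)) = load i"
      using u1 u2 that by (simp_all add: GS_solution_iff)
    then show ?thesis unfolding d_def right_diff_distrib sum_subtractf by linarith
  qed
  \<comment> \<open>test the difference of the two discrete equations with \<open>d\<close>\<close>
  have "(\<Sum>i\<in>Iint. mass i * (\<beta> (u1 i) - \<beta> (u2 i)) * d i) + quad_form stiffness Iint d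
      = (\<Sum>i\<in>Iint. (mass i * (\<beta> (u1 i) - \<beta> (u2 i)) + (\<Sum>j\<in>Iint. stiffness j i * d j)) * d i)"
    unfolding quad_form_def
    by (subst sum.swap) (simp add: distrib_right sum.distrib sum_distrib_right)
  also have "\<dots> = 0" using eq by simp
  moreover have "0 \<le> (\<Sum>i\<in>Iint. mass i * (\<beta> (u1 i) - \<beta> (u2 i)) * d i)"
    unfolding d_def mult.assoc
    by (intro sum_nonneg mult_nonneg_nonneg mass_nonneg mono_diff_mult_nonneg \<beta>_mono \<zeta>_mono)
  ultimately have "quad_form stiffness Iint d \<le> 0" by linarith
  then have "\<forall>i\<in>Iint. d i = 0" using stiffness_pos_def by force
  moreover have "u1 \<in> XD0 Ib" "u2 \<in> XD0 Ib" using u1 u2 by (simp_all add: GS_solution_iff)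
  ultimately show ?thesis by (auto simp: compw_def d_def XD0_def fun_eq_iff)
qed

lemma GS_solution_PiD_unique:
  assumes u1: "is_GS_solution \<Omega> Ib U gradD \<beta> \<zeta> \<Lambda> Qf F u1"
    and u2: "is_GS_solution \<Omega> Ib U gradD \<beta> \<zeta> \<Lambda> Qf F u2"
  shows "AE x in \<mu>. PiD U u1 x = PiD U u2 x"
proof -
  have \<zeta>_eq: "\<zeta> (u1 i) = \<zeta> (u2 i)" for i
    using GS_solution_\<zeta>_unique[OF u1 u2] by (simp add: compw_def fun_eq_iff)
  have XD0: "u1 \<in> XD0 Ib" "u2 \<in> XD0 Ib" using u1 u2 by (simp_all add: GS_solution_iff)
  have cell_eq: "u1 i = u2 i" if "i \<in> Iint" "mass i \<noteq> 0" for i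
  proof -
    have "mass i * \<beta> (u1 i) + (\<Sum>j\<in>Iint. stiffness j i * \<zeta> (u2 j)) = load i"
      "mass i * \<beta> (u2 i) + (\<Sum>j\<in>Iint. stiffness j i * \<zeta> (u2 j)) = load i"
      using u1 u2 that(1) \<zeta>_eq by (simp_all add: GS_solution_iff)
    then have "mass i * \<beta> (u1 i) = mass i * \<beta> (u2 i)" by linarith
    then have "\<beta> (u1 i) + \<zeta> (u1 i) = \<beta> (u2 i) + \<zeta> (u2 i)" using that(2) \<zeta>_eq by simp
    then show ?thesis using strict_mono_eq[OF \<beta>_plus_\<zeta>_strict] by blast
  qed
  have null: "AE x in \<mu>. x \<notin> U i" if "i \<in> Iint" "mass i = 0" for i
  proof -
    have "AE x in \<mu>. indicator (U i) x = (0::real)"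
      using that integral_nonneg_eq_0_iff_AE[OF integrable_cell[OF that(1)]] by (simp add: mass_def)
    then show ?thesis by eventually_elim (simp add: indicator_def split: if_splits)
  qed
  have "AE x in \<mu>. \<forall>i\<in>{i\<in>Iint. mass i = 0}. x \<notin> U i"
    by (rule eventually_ball_finite) (use null in auto)
  then show ?thesis using AE_space
  proof eventually_elim
    case (elim x)
    then obtain k where k: "x \<in> U k" using U_cover by auto
    show ?case
    proof (cases "k \<in> Ib")
      case True
      then show ?thesis using k XD0 by (simp add: PiD_cell XD0_def)
    next
      case False
      then show ?thesis using k elim cell_eq by (auto simp: PiD_cell)
    qed
  qed
qed

end

theorem mainTheorem2:
  fixes \<Omega> :: "(real^'n) set"
    and \<zeta> \<beta> :: "real \<Rightarrow> real"
    and M0 M1 K0 K1 lam_lo lam_hi :: real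
    and \<Lambda> :: "real^'n \<Rightarrow> real^'n^'n"
    and f :: "real^'n \<Rightarrow> real"
    and F :: "real^'n \<Rightarrow> real^'n"
    and Ib :: "'i::finite set"
    and U :: "'i \<Rightarrow> (real^'n) set"
    and gradD :: "('i \<Rightarrow> real) \<Rightarrow> real^'n \<Rightarrow> real^'n"
    and Q :: "(real^'n \<Rightarrow> real) \<Rightarrow> (real^'n \<Rightarrow> real)"
  assumes \<Omega>_open: "open \<Omega>" and \<Omega>_bounded: "bounded \<Omega>" and \<Omega>_conn: "connected \<Omega>"
    and \<zeta>_cont: "continuous_on UNIV \<zeta>" and \<zeta>_mono: "mono \<zeta>" and \<zeta>0: "\<zeta> 0 = 0"
    and M_pos: "M0 > 0" "M1 > 0" and \<zeta>_growth: "\<And>s. \<bar>\<zeta> s\<bar> \<ge> M0 * \<bar>s\<bar> - M1"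
    and \<beta>_cont: "continuous_on UNIV \<beta>" and \<beta>_mono: "mono \<beta>" and \<beta>0: "\<beta> 0 = 0"
    and K_pos: "K0 > 0" "K1 > 0" and \<beta>_growth: "\<And>s. \<bar>\<beta> s\<bar> \<le> K0 * \<bar>s\<bar> + K1"
    and \<beta>\<zeta>_strict: "strict_mono (\<lambda>s. \<beta> s + \<zeta> s)"
    and \<Lambda>_meas: "\<Lambda> \<in> borel_measurable (lebesgue_on \<Omega>)"
    and lam_pos: "lam_hi \<ge> lam_lo" "lam_lo > 0"
    and \<Lambda>_sym: "AE x in lebesgue_on \<Omega>. transpose (\<Lambda> x) = \<Lambda> x"
    and \<Lambda>_eig: "AE x in lebesgue_on \<Omega>. \<forall>c. is_eigenvalue (\<Lambda> x) c \<longrightarrow> lam_lo \<le> c \<and> c \<le> lam_hi"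
    and f_L2: "L2 \<Omega> f" and F_L2: "L2 \<Omega> F"
    and U_disj: "\<And>i j. i \<noteq> j \<Longrightarrow> U i \<inter> U j = {}"
    and U_cover: "(\<Union>i. U i) = \<Omega>"
    and Pi_L2: "\<And>v. v \<in> XD0 Ib \<Longrightarrow> L2 \<Omega> (PiD U v)"
    and grad_L2: "\<And>v. v \<in> XD0 Ib \<Longrightarrow> L2 \<Omega> (gradD v)"
    and grad_lin: "\<And>a b v w. v \<in> XD0 Ib \<Longrightarrow> w \<in> XD0 Ib \<Longrightarrow>
        AE x in lebesgue_on \<Omega>. gradD (\<lambda>i. a * v i + b * w i) x = a *\<^sub>R gradD v x + b *\<^sub>R gradD w x"
    and grad_norm: "\<And>v. v \<in> XD0 Ib \<Longrightarrow>
        integral\<^sup>L (lebesgue_on \<Omega>) (\<lambda>x. (norm (gradD v x))\<^sup>2) = 0 \<Longrightarrow> v = (\<lambda>i. 0)"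
    and Q_L2: "\<And>g. L2 \<Omega> g \<Longrightarrow> L2 \<Omega> (Q g)"
  shows "(\<exists>u. is_GS_solution \<Omega> Ib U gradD \<beta> \<zeta> \<Lambda> (Q f) F u)
       \<and> (\<forall>u1 u2. is_GS_solution \<Omega> Ib U gradD \<beta> \<zeta> \<Lambda> (Q f) F u1
                 \<longrightarrow> is_GS_solution \<Omega> Ib U gradD \<beta> \<zeta> \<Lambda> (Q f) F u2
                 \<longrightarrow> compw \<zeta> u1 = compw \<zeta> u2
                    \<and> (AE x in lebesgue_on \<Omega>. PiD U u1 x = PiD U u2 x))"
proof -
  interpret gradient_scheme \<Omega> Ib U gradD \<zeta> \<beta> M0 M1 lam_lo lam_hi \<Lambda> "Q f" F
    by (unfold_locales; fact assms Q_L2[OF f_L2])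
  have "compw \<zeta> u1 = compw \<zeta> u2 \<and> (AE x in lebesgue_on \<Omega>. PiD U u1 x = PiD U u2 x)"
    if "is_GS_solution \<Omega> Ib U gradD \<beta> \<zeta> \<Lambda> (Q f) F u1"
      "is_GS_solution \<Omega> Ib U gradD \<beta> \<zeta> \<Lambda> (Q f) F u2" for u1 u2
    using GS_solution_\<zeta>_unique[OF that] GS_solution_PiD_unique[OF that] by simp
  with GS_solution_exists show ?thesis by blast
qed

end
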